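(* For every integer $N\ge1$, with $\omega=e^{2\pi i/N}$, $$0\le\sum_{k=0}^{N-1}\dim\mathbb J^{(1)}_\gamma(\omega^k)\le2\dim(M).$$
   Context: Let $(M,g)$ be a semi-Riemannian manifold of dimension $n$ and $\gamma:[0,1]\to M$ an orientation preserving closed geodesic, extended $1$-periodically. Fix a smooth $1$-periodic family of isomorphisms $T_t:\mathbb R^n\to T_{\gamma(t)}M$ with $g(T_te_i,T_te_j)=\epsilon_i\delta_{ij}$, $\epsilon_i\in\{\pm1\}$. Let $\overline R_t=T_t^{-1}\circ R(\dot\gamma(t),T_t\,\cdot\,)\dot\gamma(t)$ (curvature $R(X,Y)=[\nabla_X,\nabla_Y]-\nabla_{[X,Y]}$) and $\Gamma_t$ defined by $T_t^{-1}\tfrac{D}{dt}\big(T_t\overline V(t)\big)=\overline V'(t)+\Gamma_t\overline V(t)$, extended $\mathbb C$-linearly to $\mathbb C^n$. The Jacobi equation (J) is $V''+2\Gamma_rV'+(\Gamma_r'+\Gamma_r^2-\overline R_r)V=0$ for $V:[0,1]\to\mathbb C^n$. For $z\in\mathbb S^1$, $\mathbb J^{(1)}_\gamma(z)=\{V\ \text{solution of (J)}:V(0)=V(1)=0,\ V'(1)=zV'(0)\}$ (complex vector space). *)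

theory Defs
  imports "HOL-Analysis.Analysis" "HOL-Library.Function_Algebras"
begin

text \<open>The Jacobi equation along a closed geodesic, written in a 1-periodic
parallel-type frame T_t, only involves the real n x n matrix functions
Gamma_t and Rbar_t.  We work with these coefficient functions directly.\<close>

definition cmat :: "real^'n^'m \<Rightarrow> complex^'n^'m" where
  "cmat A = (\<chi> i j. complex_of_real (A $ i $ j))"

text \<open>Diagonal signature matrix diag(eps_1,...,eps_n) of the metric in the frame.\<close>
definition sig_mat :: "real^'n \<Rightarrow> real^'n^'n" where
  "sig_mat \<epsilon> = (\<chi> i j. if i = j then \<epsilon> $ i else 0)"

text \<open>Solutions V : [0,1] -> C^n of the Jacobi equation
  V'' + 2 Gamma V' + (Gamma' + Gamma^2 - Rbar) V = 0.
  A function on [0,1] is represented extensionally: it vanishes outside [0,1].\<close>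
definition jacobi_solution ::
  "(real \<Rightarrow> real^'n^'n) \<Rightarrow> (real \<Rightarrow> real^'n^'n) \<Rightarrow> (real \<Rightarrow> complex^'n) \<Rightarrow> bool" where
  "jacobi_solution \<Gamma> R V \<longleftrightarrow>
     (\<forall>t. t \<notin> {0..1} \<longrightarrow> V t = 0) \<and>
     (\<exists>V1 V2. \<forall>t\<in>{0..1}.
        (V has_vector_derivative V1 t) (at t within {0..1}) \<and>
        (V1 has_vector_derivative V2 t) (at t within {0..1}) \<and>
        V2 t + (2::complex) *s (cmat (\<Gamma> t) *v V1 t)
          + cmat (vector_derivative \<Gamma> (at t) + \<Gamma> t ** \<Gamma> t - R t) *v V t = 0)"

definition J1 ::
  "(real \<Rightarrow> real^'n^'n) \<Rightarrow> (real \<Rightarrow> real^'n^'n) \<Rightarrow> complex \<Rightarrow> (real \<Rightarrow> complex^'n) set" where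
  "J1 \<Gamma> R z = {V. jacobi_solution \<Gamma> R V \<and> V 0 = 0 \<and> V 1 = 0 \<and>
      vector_derivative V (at 1 within {0..1}) = z *s vector_derivative V (at 0 within {0..1})}"

definition cdim :: "(real \<Rightarrow> complex^'n) set \<Rightarrow> nat" where
  "cdim S = vector_space.dim (\<lambda>(c::complex) (V::real \<Rightarrow> complex^'n) t. c *s V t) S"

end

theory Submission
  imports Defs
begin

text \<open>
  A solution of the Jacobi equation is determined by its Cauchy data
  (V(0), V'(0)): this is the energy estimate for a linear second-order ODE with bounded
  coefficients.  Hence on the space of solutions with V(0) = 0 the initial velocity
  V \<mapsto> V'(0) is an injective linear map into C^n.  For V in J1(z) the end velocity is
  V'(1) = z V'(0), so the spaces J1(z) behave like eigenspaces: for pairwise distinct z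
  they are linearly independent.  Picking a basis of every J1(z), z ranging over a finite
  set, the initial velocities of all basis vectors together are linearly independent in C^n,
  so the dimensions add up to at most n.  Applied to the N distinct N-th roots of unity this
  gives the bound n, which is stronger than the claimed 2n.
\<close>

text \<open>Differential Gronwall inequality with zero initial value: a non-negative quantity
  growing at most exponentially and starting at 0 stays 0.  Proved by showing that
  exp(-C t) E(t) is non-increasing (mean value theorem).\<close>
lemma energy_vanishes:
  fixes E E' :: "real \<Rightarrow> real" and b C s :: real
  assumes deriv: "\<And>t. t \<in> {0..b} \<Longrightarrow> (E has_field_derivative E' t) (at t within {0..b})"
    and growth: "\<And>t. t \<in> {0..b} \<Longrightarrow> E' t \<le> C * E t"
    and E0: "E 0 = 0" and s: "s \<in> {0..b}" and nonneg: "E s \<ge> 0"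
  shows "E s = 0"
proof -
  define F where "F t = exp (- C * t) * E t" for t
  define F' where "F' t = exp (- C * t) * (E' t - C * E t)" for t
  have "\<exists>x\<in>{0..s}. F s - F 0 = F' x * (s - 0)"
  proof (rule mvt_very_simple)
    fix x assume x: "0 \<le> x" "x \<le> s"
    have "((\<lambda>t. exp (- C * t)) has_field_derivative exp (- C * x) * (- C)) (at x within {0..b})"
      by (auto intro!: derivative_eq_intros)
    from DERIV_mult[OF this deriv] x s
    have "(F has_field_derivative F' x) (at x within {0..b})"
      unfolding F_def F'_def by (simp add: algebra_simps)
    then have "(F has_field_derivative F' x) (at x within {0..s})"
      by (rule has_field_derivative_subset) (use s in auto)
    then show "(F has_derivative (*) (F' x)) (at x within {0..s})"
      by (simp add: has_field_derivative_def)
  qed (use s in auto)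
  then obtain x where x: "x \<in> {0..s}" and mvt: "F s - F 0 = F' x * s" by auto
  have "E' x - C * E x \<le> 0" using growth[of x] x s by auto
  then have "F' x \<le> 0" unfolding F'_def by (simp add: mult_nonneg_nonpos)
  with mvt s have "exp (- C * s) * E s \<le> 0"
    by (simp add: F_def E0 mult_nonpos_nonneg)
  with nonneg show ?thesis by (simp add: mult_le_0_iff)
qed

text \<open>The energy |V|^2 + |V'|^2 satisfies the hypothesis
  of the Gronwall lemma above.\<close>
lemma second_order_ode_unique:
  fixes V V1 V2 :: "real \<Rightarrow> 'a::real_inner" and b K s :: real
  assumes deriv: "\<And>t. t \<in> {0..b} \<Longrightarrow>
        (V has_vector_derivative V1 t) (at t within {0..b}) \<and>
        (V1 has_vector_derivative V2 t) (at t within {0..b})"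
    and bound: "\<And>t. t \<in> {0..b} \<Longrightarrow> norm (V2 t) \<le> K * (norm (V t) + norm (V1 t))"
    and K: "K \<ge> 0" and V0: "V 0 = 0" and V10: "V1 0 = 0" and s: "s \<in> {0..b}"
  shows "V s = 0"
proof -
  define E where "E t = V t \<bullet> V t + V1 t \<bullet> V1 t" for t
  define E' where "E' t = 2 * (V t \<bullet> V1 t) + 2 * (V1 t \<bullet> V2 t)" for t
  have "E s = 0"
  proof (rule energy_vanishes[where E = E and b = b and C = "1 + 3 * K"])
    fix t assume t: "t \<in> {0..b}"
    have "(E has_derivative (\<lambda>h. (V t \<bullet> h *\<^sub>R V1 t + h *\<^sub>R V1 t \<bullet> V t) +
        (V1 t \<bullet> h *\<^sub>R V2 t + h *\<^sub>R V2 t \<bullet> V1 t))) (at t within {0..b})"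
      unfolding E_def using deriv[OF t]
      by (intro derivative_intros) (simp_all add: has_vector_derivative_def)
    moreover have "(\<lambda>h. (V t \<bullet> h *\<^sub>R V1 t + h *\<^sub>R V1 t \<bullet> V t) +
        (V1 t \<bullet> h *\<^sub>R V2 t + h *\<^sub>R V2 t \<bullet> V1 t)) = (*) (E' t)"
      by (auto simp: E'_def inner_commute algebra_simps)
    ultimately show "(E has_field_derivative E' t) (at t within {0..b})"
      by (simp add: has_field_derivative_def)
  next
    fix t assume t: "t \<in> {0..b}"
    define x y where "x = norm (V t)" and "y = norm (V1 t)"
    have xy: "x \<ge> 0" "y \<ge> 0" by (simp_all add: x_def y_def)
    have "V t \<bullet> V1 t \<le> x * y"
      unfolding x_def y_def by (rule norm_cauchy_schwarz)
    moreover have "V1 t \<bullet> V2 t \<le> y * (K * (x + y))"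
    proof -
      have "V1 t \<bullet> V2 t \<le> y * norm (V2 t)"
        unfolding y_def by (rule norm_cauchy_schwarz)
      also have "\<dots> \<le> y * (K * (x + y))"
        using bound[OF t] xy by (simp add: x_def y_def mult_left_mono)
      finally show ?thesis .
    qed
    ultimately have "E' t \<le> 2 * x * y + 2 * K * x * y + 2 * K * y\<^sup>2"
      by (simp add: E'_def algebra_simps power2_eq_square)
    also have "\<dots> \<le> (1 + 3 * K) * (x\<^sup>2 + y\<^sup>2)"
    proof -
      have "2 * x * y \<le> x\<^sup>2 + y\<^sup>2" using sum_squares_bound[of x y] by simp
      moreover from this have "K * (2 * x * y) \<le> K * (x\<^sup>2 + y\<^sup>2)" using K by (rule mult_left_mono)
      moreover have "K * x\<^sup>2 \<ge> 0" using K by simp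
      ultimately show ?thesis by (simp add: algebra_simps)
    qed
    also have "\<dots> = (1 + 3 * K) * E t"
      by (simp add: E_def x_def y_def power2_norm_eq_inner)
    finally show "E' t \<le> (1 + 3 * K) * E t" .
  qed (use s in \<open>simp_all add: E_def V0 V10\<close>)
  then show "V s = 0"
    by (simp add: E_def add_nonneg_eq_0_iff)
qed

lemma norm_cvec_scale: "norm (c *s (x::complex^'n)) = norm c * norm x"
  unfolding norm_vec_def by (simp add: L2_set_right_distrib norm_mult)

lemma bounded_linear_cvec_scale: "bounded_linear (\<lambda>x::complex^'n. c *s x)"
  by unfold_locales
    (auto simp: vector_add_ldistrib vec_eq_iff scaleR_conv_of_real norm_cvec_scale
      intro!: exI[of _ "norm c"])

lemma cmat_bound:
  fixes M :: "real^'n^'n" and x :: "complex^'n"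
  shows "norm (cmat M *v x) \<le> (real CARD('n) * real CARD('n) * norm M) * norm x"
proof -
  have entry: "norm (complex_of_real (M $ i $ j) * x $ j) \<le> norm M * norm x" for i j
  proof -
    have "\<bar>M $ i $ j\<bar> \<le> norm M"
      using component_le_norm_cart[of "M $ i" j] Finite_Cartesian_Product.norm_nth_le[of M i] by linarith
    moreover have "norm (x $ j) \<le> norm x" by (rule Finite_Cartesian_Product.norm_nth_le)
    ultimately show ?thesis by (simp add: norm_mult mult_mono)
  qed
  have row: "norm ((cmat M *v x) $ i) \<le> real CARD('n) * norm M * norm x" for i
  proof -
    have "norm ((cmat M *v x) $ i) \<le> (\<Sum>j\<in>UNIV. norm (complex_of_real (M $ i $ j) * x $ j))"
      unfolding matrix_vector_mult_def cmat_def by (simp add: norm_sum)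
    also have "\<dots> \<le> real CARD('n) * norm M * norm x"
      using sum_bounded_above[of UNIV "\<lambda>j. norm (complex_of_real (M $ i $ j) * x $ j)", OF entry] by simp
    finally show ?thesis .
  qed
  have "norm (cmat M *v x) \<le> (\<Sum>i\<in>UNIV. norm ((cmat M *v x) $ i))"
    unfolding norm_vec_def by (rule L2_set_le_sum) simp
  also have "\<dots> \<le> (real CARD('n) * real CARD('n) * norm M) * norm x"
    using sum_bounded_above[of UNIV "\<lambda>i. norm ((cmat M *v x) $ i)", OF row] by simp
  finally show ?thesis .
qed

lemma cmat_bound_on_compact:
  fixes M :: "real \<Rightarrow> real^'n^'n"
  assumes "continuous_on S M" and "compact S"
  obtains K where "K \<ge> 0" and "\<And>t x. t \<in> S \<Longrightarrow> norm (cmat (M t) *v x) \<le> K * norm x"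
proof -
  obtain B where B: "\<And>t. t \<in> S \<Longrightarrow> norm (M t) \<le> B"
    using compact_imp_bounded[OF compact_continuous_image[OF assms]]
    unfolding bounded_iff by auto
  define c where "c = real CARD('n) * real CARD('n)"
  show ?thesis
  proof (rule that[of "c * \<bar>B\<bar>"])
    fix t x assume t: "t \<in> S"
    have "norm (cmat (M t) *v x) \<le> (c * norm (M t)) * norm x"
      unfolding c_def by (rule cmat_bound)
    also have "\<dots> \<le> (c * \<bar>B\<bar>) * norm x"
      using B[OF t] by (intro mult_right_mono mult_left_mono) (auto simp: c_def)
    finally show "norm (cmat (M t) *v x) \<le> c * \<bar>B\<bar> * norm x" .
  qed (simp add: c_def)
qed

abbreviation jacobi_coeff :: "(real \<Rightarrow> real^'n^'n) \<Rightarrow> (real \<Rightarrow> real^'n^'n) \<Rightarrow> real \<Rightarrow> real^'n^'n"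
  where "jacobi_coeff \<Gamma> R t \<equiv> vector_derivative \<Gamma> (at t) + \<Gamma> t ** \<Gamma> t - R t"

definition jacobi_ode ::
  "(real \<Rightarrow> real^'n^'n) \<Rightarrow> (real \<Rightarrow> real^'n^'n) \<Rightarrow>
   (real \<Rightarrow> complex^'n) \<Rightarrow> (real \<Rightarrow> complex^'n) \<Rightarrow> (real \<Rightarrow> complex^'n) \<Rightarrow> bool" where
  "jacobi_ode \<Gamma> R V V1 V2 \<longleftrightarrow> (\<forall>t\<in>{0..1}.
     (V has_vector_derivative V1 t) (at t within {0..1}) \<and>
     (V1 has_vector_derivative V2 t) (at t within {0..1}) \<and>
     V2 t + (2::complex) *s (cmat (\<Gamma> t) *v V1 t) + cmat (jacobi_coeff \<Gamma> R t) *v V t = 0)"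

lemma jacobi_solution_iff:
  "jacobi_solution \<Gamma> R V \<longleftrightarrow> (\<forall>t. t \<notin> {0..1} \<longrightarrow> V t = 0) \<and> (\<exists>V1 V2. jacobi_ode \<Gamma> R V V1 V2)"
  unfolding jacobi_solution_def jacobi_ode_def ..

abbreviation start_velocity :: "(real \<Rightarrow> complex^'n) \<Rightarrow> complex^'n"
  where "start_velocity V \<equiv> vector_derivative V (at 0 within {0..1})"

abbreviation end_velocity :: "(real \<Rightarrow> complex^'n) \<Rightarrow> complex^'n"
  where "end_velocity V \<equiv> vector_derivative V (at 1 within {0..1})"

lemma jacobi_ode_velocities:
  assumes "jacobi_ode \<Gamma> R V V1 V2"
  shows "start_velocity V = V1 0" and "end_velocity V = V1 1"
  using assms unfolding jacobi_ode_def
  by (auto intro!: vector_derivative_within_closed_interval)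

lemma jacobi_ode_lincomb:
  assumes V: "jacobi_ode \<Gamma> R V V1 V2" and W: "jacobi_ode \<Gamma> R W W1 W2"
  shows "jacobi_ode \<Gamma> R (\<lambda>t. c *s V t + W t) (\<lambda>t. c *s V1 t + W1 t) (\<lambda>t. c *s V2 t + W2 t)"
  unfolding jacobi_ode_def
proof (intro ballI conjI)
  fix t :: real assume t: "t \<in> {0..1}"
  note scale = bounded_linear.has_vector_derivative[OF bounded_linear_cvec_scale]
  show "((\<lambda>t. c *s V t + W t) has_vector_derivative c *s V1 t + W1 t) (at t within {0..1})"
    and "((\<lambda>t. c *s V1 t + W1 t) has_vector_derivative c *s V2 t + W2 t) (at t within {0..1})"
    using V W t unfolding jacobi_ode_def by (auto intro!: has_vector_derivative_add scale)
  have "(c *s V2 t + W2 t) + (2::complex) *s (cmat (\<Gamma> t) *v (c *s V1 t + W1 t))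
        + cmat (jacobi_coeff \<Gamma> R t) *v (c *s V t + W t)
      = c *s (V2 t + (2::complex) *s (cmat (\<Gamma> t) *v V1 t) + cmat (jacobi_coeff \<Gamma> R t) *v V t)
        + (W2 t + (2::complex) *s (cmat (\<Gamma> t) *v W1 t) + cmat (jacobi_coeff \<Gamma> R t) *v W t)"
    by (simp add: vec.add vec.scale vector_add_ldistrib vector_smult_assoc mult.commute add_ac)
  also have "\<dots> = 0"
    using V W t unfolding jacobi_ode_def by simp
  finally show "(c *s V2 t + W2 t) + (2::complex) *s (cmat (\<Gamma> t) *v (c *s V1 t + W1 t))
        + cmat (jacobi_coeff \<Gamma> R t) *v (c *s V t + W t) = 0" .
qed

lemma jacobi_ode_zero: "jacobi_ode \<Gamma> R (\<lambda>_. 0) (\<lambda>_. 0) (\<lambda>_. 0)"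
  unfolding jacobi_ode_def by simp

lemma jacobi_solution_zero:
  shows "jacobi_solution \<Gamma> R (\<lambda>_. 0)"
    and "start_velocity (\<lambda>_. 0 :: complex^'n) = 0" and "end_velocity (\<lambda>_. 0 :: complex^'n) = 0"
  using jacobi_ode_zero jacobi_ode_velocities[OF jacobi_ode_zero]
  unfolding jacobi_solution_iff by auto

lemma jacobi_solution_lincomb:
  assumes "jacobi_solution \<Gamma> R V" and "jacobi_solution \<Gamma> R W"
  shows "jacobi_solution \<Gamma> R (\<lambda>t. c *s V t + W t)"
    and "start_velocity (\<lambda>t. c *s V t + W t) = c *s start_velocity V + start_velocity W"
    and "end_velocity (\<lambda>t. c *s V t + W t) = c *s end_velocity V + end_velocity W"
proof -
  obtain V1 V2 W1 W2 where V: "jacobi_ode \<Gamma> R V V1 V2" and W: "jacobi_ode \<Gamma> R W W1 W2"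
    using assms unfolding jacobi_solution_iff by blast
  note VW = jacobi_ode_lincomb[OF V W, of c]
  show "jacobi_solution \<Gamma> R (\<lambda>t. c *s V t + W t)"
    using assms VW unfolding jacobi_solution_iff by auto
  show "start_velocity (\<lambda>t. c *s V t + W t) = c *s start_velocity V + start_velocity W"
    and "end_velocity (\<lambda>t. c *s V t + W t) = c *s end_velocity V + end_velocity W"
    unfolding jacobi_ode_velocities[OF V] jacobi_ode_velocities[OF W] jacobi_ode_velocities[OF VW]
    by simp_all
qed

lemma jacobi_solution_sum:
  assumes "finite A" and "\<And>x. x \<in> A \<Longrightarrow> jacobi_solution \<Gamma> R (f x)"
  shows "jacobi_solution \<Gamma> R (\<lambda>t. \<Sum>x\<in>A. c x *s f x t)
    \<and> start_velocity (\<lambda>t. \<Sum>x\<in>A. c x *s f x t) = (\<Sum>x\<in>A. c x *s start_velocity (f x))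
    \<and> end_velocity (\<lambda>t. \<Sum>x\<in>A. c x *s f x t) = (\<Sum>x\<in>A. c x *s end_velocity (f x))"
  using assms
proof (induction A rule: finite_induct)
  case empty
  then show ?case by (simp add: jacobi_solution_zero)
next
  case (insert a A)
  then have "jacobi_solution \<Gamma> R (f a)" "jacobi_solution \<Gamma> R (\<lambda>t. \<Sum>x\<in>A. c x *s f x t)"
    by auto
  from jacobi_solution_lincomb[OF this, of "c a"] insert show ?case by simp
qed

interpretation FV: vector_space "\<lambda>(c::complex) (V::real \<Rightarrow> complex^'n) t. c *s V t"
  by unfold_locales (auto simp: fun_eq_iff vector_add_ldistrib vector_sadd_rdistrib)

lemma sum_fun_pointwise: "(\<Sum>x\<in>A. f x) = (\<lambda>t. \<Sum>x\<in>A. f x t)"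
  by (induction A rule: infinite_finite_induct) (auto simp: fun_eq_iff)

lemma J1_subspace: "FV.subspace (J1 \<Gamma> R z)"
  unfolding FV.subspace_def
proof (intro conjI ballI allI)
  show "0 \<in> J1 \<Gamma> R z"
    unfolding J1_def zero_fun_def by (simp add: jacobi_solution_zero)
next
  fix V W assume "V \<in> J1 \<Gamma> R z" "W \<in> J1 \<Gamma> R z"
  then show "V + W \<in> J1 \<Gamma> R z"
    using jacobi_solution_lincomb[of \<Gamma> R V W 1]
    unfolding J1_def plus_fun_def by (simp add: vector_add_ldistrib)
next
  fix c :: complex and V assume "V \<in> J1 \<Gamma> R z"
  then show "(\<lambda>t. c *s V t) \<in> J1 \<Gamma> R z"
    using jacobi_solution_lincomb[of \<Gamma> R V "\<lambda>_. 0" c]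
    unfolding J1_def by (simp add: jacobi_solution_zero vector_smult_assoc mult.commute)
qed

lemma (in vector_space) independent_image_if_scalars_zero:
  fixes g :: "'i \<Rightarrow> 'b" and U :: "'i set"
  assumes scalars_zero: "\<And>A c x. finite A \<Longrightarrow> A \<subseteq> U \<Longrightarrow>
      (\<Sum>y\<in>A. scale (c y) (g y)) = 0 \<Longrightarrow> x \<in> A \<Longrightarrow> c x = 0"
  shows "inj_on g U \<and> independent (g ` U)"
proof
  show inj: "inj_on g U"
  proof (rule inj_onI, rule ccontr)
    fix x y assume xy: "x \<in> U" "y \<in> U" "g x = g y" "x \<noteq> y"
    define c :: "'i \<Rightarrow> 'a" where "c w = (if w = x then 1 else - 1)" for w
    have "(\<Sum>w\<in>{x, y}. scale (c w) (g w)) = 0"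
      using xy by (simp add: c_def)
    from scalars_zero[OF _ _ this] xy have "c x = 0" by simp
    then show False by (simp add: c_def)
  qed
  show "independent (g ` U)"
    unfolding independent_explicit_finite_subsets
  proof (intro allI impI ballI)
    fix S u v assume S: "S \<subseteq> g ` U" "finite S" and sum0: "(\<Sum>v\<in>S. scale (u v) v) = 0"
      and v: "v \<in> S"
    define A where "A = U \<inter> g -` S"
    have gA: "g ` A = S" using S(1) unfolding A_def by blast
    have injA: "inj_on g A" using inj unfolding A_def by (rule inj_on_subset) blast
    have "finite A" using S(2) gA injA finite_image_iff by metis
    moreover have "(\<Sum>x\<in>A. scale (u (g x)) (g x)) = 0"
      using sum0 sum.reindex[OF injA, of "\<lambda>v. scale (u v) v"] gA by simp
    ultimately have "u (g x) = 0" if "x \<in> A" for x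
      using scalars_zero[of A "u \<circ> g" x] that by (simp add: A_def)
    then show "u v = 0" using v gA by auto
  qed
qed

lemma (in vector_space) independent_Sigma_of_independent_subspaces:
  fixes W B :: "'i \<Rightarrow> 'b set"
  assumes Z: "finite Z" and W: "\<And>z. subspace (W z)"
    and B_sub: "\<And>z. B z \<subseteq> W z" and B_ind: "\<And>z. independent (B z)"
    and W_ind: "\<And>w. (\<And>z. z \<in> Z \<Longrightarrow> w z \<in> W z) \<Longrightarrow> (\<Sum>z\<in>Z. w z) = 0 \<Longrightarrow> \<forall>z\<in>Z. w z = 0"
    and A: "finite A" "A \<subseteq> Sigma Z B" and sum0: "(\<Sum>q\<in>A. scale (c q) (snd q)) = 0"
    and p: "p \<in> A"
  shows "c p = 0"
proof -
  have A_Z: "fst q \<in> Z" and A_B: "snd q \<in> B (fst q)" if "q \<in> A" for q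
    using that A(2) by (cases q; auto)+
  define w where "w z = (\<Sum>q\<in>{q\<in>A. fst q = z}. scale (c q) (snd q))" for z
  have "w z \<in> W z" for z
    unfolding w_def using A_B B_sub by (intro subspace_sum[OF W] subspace_scale[OF W]) blast
  moreover have "fst ` A \<subseteq> Z" using A_Z by blast
  then have "(\<Sum>z\<in>Z. w z) = 0"
    using sum.group[OF A(1) Z, of fst "\<lambda>q. scale (c q) (snd q)"] sum0 unfolding w_def by simp
  ultimately have "w (fst p) = 0"
    using W_ind A_Z[OF p] by blast
  define Ap where "Ap = {q\<in>A. fst q = fst p}"
  have inj: "inj_on snd Ap"
    unfolding Ap_def by (auto intro!: inj_onI simp: prod_eq_iff)
  have "(\<Sum>v\<in>snd ` Ap. scale (c (fst p, v)) v) = (\<Sum>q\<in>Ap. scale (c (fst p, snd q)) (snd q))"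
    by (simp add: sum.reindex[OF inj])
  also have "\<dots> = w (fst p)"
    unfolding w_def Ap_def by (intro sum.cong) auto
  finally have sum_Ap: "(\<Sum>v\<in>snd ` Ap. scale (c (fst p, v)) v) = 0"
    using \<open>w (fst p) = 0\<close> by simp
  have "c (fst p, snd p) = 0"
  proof (rule independentD[OF B_ind, where t = "snd ` Ap" and u = "\<lambda>v. c (fst p, v)"])
    show "finite (snd ` Ap)" using A(1) by (simp add: Ap_def)
    show "snd ` Ap \<subseteq> B (fst p)" using A_B by (auto simp: Ap_def)
    show "snd p \<in> snd ` Ap" using p by (simp add: Ap_def)
  qed (use sum_Ap in simp)
  then show ?thesis by simp
qed

context
  fixes \<Gamma> R :: "real \<Rightarrow> real^'n^'n"
  assumes \<Gamma>_diff: "\<forall>t. \<Gamma> differentiable (at t)"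
    and \<Gamma>'_cont: "continuous_on UNIV (\<lambda>t. vector_derivative \<Gamma> (at t))"
    and R_cont: "continuous_on UNIV R"
begin

lemma jacobi_coeffs_bounded:
  obtains K where "K \<ge> 0"
    and "\<And>t x. t \<in> {0..1} \<Longrightarrow> norm (cmat (\<Gamma> t) *v x) \<le> K * norm x"
    and "\<And>t x. t \<in> {0..1} \<Longrightarrow> norm (cmat (jacobi_coeff \<Gamma> R t) *v x) \<le> K * norm x"
proof -
  have \<Gamma>_cont: "continuous_on UNIV \<Gamma>"
    using \<Gamma>_diff by (simp add: continuous_at_imp_continuous_on differentiable_imp_continuous_within)
  have Q_cont: "continuous_on UNIV (\<lambda>t. jacobi_coeff \<Gamma> R t)"
    unfolding matrix_matrix_mult_def
    by (intro continuous_intros) (use \<Gamma>'_cont R_cont \<Gamma>_cont in auto)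
  obtain K1 where "K1 \<ge> 0"
    and K1: "\<And>t x. t \<in> {0..1} \<Longrightarrow> norm (cmat (\<Gamma> t) *v x) \<le> K1 * norm x"
    by (rule cmat_bound_on_compact[OF continuous_on_subset[OF \<Gamma>_cont subset_UNIV]
          compact_Icc[of 0 1]]) blast
  obtain K2 where
    K2: "\<And>t x. t \<in> {0..1} \<Longrightarrow> norm (cmat (jacobi_coeff \<Gamma> R t) *v x) \<le> K2 * norm x"
    by (rule cmat_bound_on_compact[OF continuous_on_subset[OF Q_cont subset_UNIV]
          compact_Icc[of 0 1]]) blast
  show ?thesis
  proof (rule that[of "max K1 K2"])
    fix t and x :: "complex^'n" assume t: "t \<in> {0..(1::real)}"
    have "K1 * norm x \<le> max K1 K2 * norm x" "K2 * norm x \<le> max K1 K2 * norm x"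
      by (intro mult_right_mono; simp)+
    then show "norm (cmat (\<Gamma> t) *v x) \<le> max K1 K2 * norm x"
      and "norm (cmat (jacobi_coeff \<Gamma> R t) *v x) \<le> max K1 K2 * norm x"
      using K1[OF t, of x] K2[OF t, of x] by linarith+
  qed (use \<open>K1 \<ge> 0\<close> in simp)
qed

lemma jacobi_solution_unique:
  assumes sol: "jacobi_solution \<Gamma> R V" and V0: "V 0 = 0" and V'0: "start_velocity V = 0"
  shows "V = 0"
proof -
  obtain V1 V2 where ode: "jacobi_ode \<Gamma> R V V1 V2"
    and outside: "\<And>t. t \<notin> {0..1} \<Longrightarrow> V t = 0"
    using sol unfolding jacobi_solution_iff by blast
  obtain K where K: "K \<ge> 0"
    and K\<Gamma>: "\<And>t x. t \<in> {0..1} \<Longrightarrow> norm (cmat (\<Gamma> t) *v x) \<le> K * norm x"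
    and KQ: "\<And>t x. t \<in> {0..1} \<Longrightarrow> norm (cmat (jacobi_coeff \<Gamma> R t) *v x) \<le> K * norm x"
    by (rule jacobi_coeffs_bounded) blast
  have "V s = 0" if s: "s \<in> {0..1}" for s
  proof (rule second_order_ode_unique[where b = 1 and K = "3 * K"])
    fix t :: real assume t: "t \<in> {0..1}"
    show "(V has_vector_derivative V1 t) (at t within {0..1}) \<and>
        (V1 has_vector_derivative V2 t) (at t within {0..1})"
      using ode t unfolding jacobi_ode_def by blast
    have "V2 t = - ((2::complex) *s (cmat (\<Gamma> t) *v V1 t)) - cmat (jacobi_coeff \<Gamma> R t) *v V t"
      using ode t unfolding jacobi_ode_def by (simp add: eq_neg_iff_add_eq_0 algebra_simps)
    then have "norm (V2 t) \<le> 2 * norm (cmat (\<Gamma> t) *v V1 t) + norm (cmat (jacobi_coeff \<Gamma> R t) *v V t)"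
      using norm_triangle_ineq4[of "- ((2::complex) *s (cmat (\<Gamma> t) *v V1 t))"
          "cmat (jacobi_coeff \<Gamma> R t) *v V t"]
      by (simp add: norm_cvec_scale)
    also have "\<dots> \<le> 2 * (K * norm (V1 t)) + K * norm (V t)"
      using K\<Gamma>[OF t] KQ[OF t] by (intro add_mono mult_left_mono) auto
    also have "\<dots> \<le> 3 * K * (norm (V t) + norm (V1 t))"
      using K by (simp add: algebra_simps)
    finally show "norm (V2 t) \<le> 3 * K * (norm (V t) + norm (V1 t))" .
  qed (use K V0 V'0 s jacobi_ode_velocities(1)[OF ode] in auto)
  with outside show ?thesis by (auto simp: fun_eq_iff)
qed

lemma jacobi_lincomb_vanishes:
  assumes "finite A" and sol: "\<And>x. x \<in> A \<Longrightarrow> jacobi_solution \<Gamma> R (f x) \<and> f x 0 = 0"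
    and "(\<Sum>x\<in>A. c x *s start_velocity (f x)) = 0"
  shows "(\<lambda>t. \<Sum>x\<in>A. c x *s f x t) = 0"
  using jacobi_solution_sum[where \<Gamma> = \<Gamma> and R = R and f = f and c = c] assms
  by (intro jacobi_solution_unique) auto

text \<open>The spaces J1(z) for pairwise distinct multipliers z are linearly independent, like
  eigenspaces: the map V \<mapsto> V'(1) - a V'(0) kills J1(a) and acts on the initial velocity
  of an element of J1(z) as multiplication by z - a.\<close>
lemma J1_independent:
  assumes "finite Z" and "\<And>z. z \<in> Z \<Longrightarrow> f z \<in> J1 \<Gamma> R z" and "(\<Sum>z\<in>Z. f z) = 0"
  shows "\<forall>z\<in>Z. f z = 0"
  using assms
proof (induction Z arbitrary: f rule: finite_induct)
  case empty
  then show ?case by simp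
next
  case (insert a Z)
  have J: "jacobi_solution \<Gamma> R (f z) \<and> f z 0 = 0 \<and> end_velocity (f z) = z *s start_velocity (f z)"
    if "z \<in> insert a Z" for z
    using insert.prems(1)[OF that] unfolding J1_def by auto
  have sol: "\<And>z. z \<in> insert a Z \<Longrightarrow> jacobi_solution \<Gamma> R (f z)"
    using J by blast
  have vanish: "(\<lambda>t. \<Sum>z\<in>insert a Z. 1 *s f z t) = (\<lambda>_. 0)"
    using insert.prems(2) unfolding sum_fun_pointwise by (simp add: fun_eq_iff)
  have start0: "(\<Sum>z\<in>insert a Z. start_velocity (f z)) = 0"
    and end0: "(\<Sum>z\<in>insert a Z. end_velocity (f z)) = 0"
    using jacobi_solution_sum[of "insert a Z" \<Gamma> R f "\<lambda>_. 1"] sol insert.hyps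
    unfolding vanish by (simp_all add: jacobi_solution_zero)
  have "(\<Sum>z\<in>Z. (z - a) *s start_velocity (f z))
      = (\<Sum>z\<in>insert a Z. (z - a) *s start_velocity (f z))"
    using insert.hyps by simp
  also have "\<dots> = (\<Sum>z\<in>insert a Z. end_velocity (f z) - a *s start_velocity (f z))"
    using J by (intro sum.cong) (auto simp: vec.scale_left_diff_distrib)
  also have "\<dots> = 0"
    using start0 end0 by (simp add: sum_subtractf flip: vec.scale_sum_right)
  finally have lin0: "(\<lambda>t. \<Sum>z\<in>Z. (z - a) *s f z t) = 0"
    by (intro jacobi_lincomb_vanishes) (use J insert.hyps in auto)
  have inJ: "\<And>z. z \<in> Z \<Longrightarrow> (\<lambda>t. (z - a) *s f z t) \<in> J1 \<Gamma> R z"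
    using insert.prems(1) by (intro FV.subspace_scale[OF J1_subspace]) auto
  have "(\<Sum>z\<in>Z. (\<lambda>t. (z - a) *s f z t)) = 0"
    unfolding sum_fun_pointwise by (rule lin0)
  then have "\<forall>z\<in>Z. (\<lambda>t. (z - a) *s f z t) = 0"
    using insert.IH[OF inJ] by blast
  then have Z0: "\<forall>z\<in>Z. f z = 0"
    using insert.hyps by (auto simp: fun_eq_iff)
  with insert.prems(2) insert.hyps have "f a = 0"
    by (simp add: zero_fun_def)
  with Z0 show ?case by blast
qed

text \<open>Choosing a basis B(z) of every J1(z), the initial
  velocities of all basis vectors, indexed by the pairs (z, V) with V in B(z), form an
  independent family in C^n.\<close>
lemma sum_cdim_J1_le:
  assumes Z: "finite Z"
  shows "(\<Sum>z\<in>Z. cdim (J1 \<Gamma> R z)) \<le> CARD('n)"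
proof -
  have "\<exists>B. B \<subseteq> J1 \<Gamma> R z \<and> FV.independent B \<and> card B = cdim (J1 \<Gamma> R z)" for z
  proof -
    obtain B where "B \<subseteq> J1 \<Gamma> R z" "FV.independent B" "card B = FV.dim (J1 \<Gamma> R z)"
      by (rule FV.basis_exists) blast
    then show ?thesis unfolding cdim_def by blast
  qed
  then obtain B where B_sub: "\<And>z. B z \<subseteq> J1 \<Gamma> R z" and B_ind: "\<And>z. FV.independent (B z)"
    and B_card: "\<And>z. card (B z) = cdim (J1 \<Gamma> R z)"
    by metis
  define U where "U = Sigma Z B"
  define g where "g p = start_velocity (snd p)" for p :: "complex \<times> (real \<Rightarrow> complex^'n)"
  have "c p = 0" if A: "finite A" "A \<subseteq> U" and sum0: "(\<Sum>q\<in>A. c q *s g q) = 0" and p: "p \<in> A"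
    for A c p
  proof (rule FV.independent_Sigma_of_independent_subspaces
      [OF Z J1_subspace B_sub B_ind J1_independent[OF Z] A(1) _ _ p])
    show "A \<subseteq> Sigma Z B" using A(2) by (simp add: U_def)
    have "snd q \<in> J1 \<Gamma> R (fst q)" if "q \<in> A" for q
      using that A(2) B_sub by (cases q) (auto simp: U_def)
    then have "(\<lambda>t. \<Sum>q\<in>A. c q *s snd q t) = 0"
      using A(1) sum0 unfolding g_def J1_def by (intro jacobi_lincomb_vanishes) auto
    then show "(\<Sum>q\<in>A. (\<lambda>t. c q *s snd q t)) = 0"
      by (simp add: sum_fun_pointwise)
  qed
  then have "inj_on g U \<and> vec.independent (g ` U)"
    by (intro vec.independent_image_if_scalars_zero) blast
  then have inj_g: "inj_on g U" and card_le: "card (g ` U) \<le> CARD('n)"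
    using vec.independent_card_le_dim[of "g ` U" UNIV] by (auto simp: card_cart_basis)
  have "finite U"
    using \<open>inj_on g U \<and> vec.independent (g ` U)\<close> vec.finiteI_independent finite_image_iff by metis
  have B_fin: "finite (B z)" if "z \<in> Z" for z
  proof (rule finite_subset)
    show "B z \<subseteq> snd ` U" using that unfolding U_def by force
  qed (use \<open>finite U\<close> in blast)
  have "(\<Sum>z\<in>Z. cdim (J1 \<Gamma> R z)) = card U"
    unfolding U_def using Z B_fin by (simp add: B_card)
  also have "\<dots> = card (g ` U)" using card_image[OF inj_g] by simp
  finally show ?thesis using card_le by simp
qed

end

lemma roots_of_unity_inj:
  fixes N :: nat
  assumes "N \<ge> 1"
  shows "inj_on (\<lambda>k. exp (2 * pi * \<i> / of_nat N) ^ k) {..<N}"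
proof -
  have "exp (2 * pi * \<i> / of_nat N) ^ k = exp (2 * of_real pi * \<i> * of_nat k / of_nat N)" for k
    unfolding exp_of_nat_mult[symmetric] by (simp add: field_simps)
  then show ?thesis
    using bij_betw_roots_unity[of N] assms by (simp add: bij_betw_def)
qed

theorem lemma6p2:
  fixes \<Gamma> R :: "real \<Rightarrow> real^'n^'n" and \<epsilon> :: "real^'n" and N :: nat
  assumes eps: "\<forall>i. \<epsilon> $ i = 1 \<or> \<epsilon> $ i = -1"
    and \<Gamma>_diff: "\<forall>t. \<Gamma> differentiable (at t)"
    and \<Gamma>_C1: "continuous_on UNIV (\<lambda>t. vector_derivative \<Gamma> (at t))"
    and R_cont: "continuous_on UNIV R"
    and \<Gamma>_per: "\<forall>t. \<Gamma> (t + 1) = \<Gamma> t"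
    and R_per: "\<forall>t. R (t + 1) = R t"
    and \<Gamma>_skew: "\<forall>t. transpose (\<Gamma> t) ** sig_mat \<epsilon> = - (sig_mat \<epsilon> ** \<Gamma> t)"
    and R_sym: "\<forall>t. transpose (R t) ** sig_mat \<epsilon> = sig_mat \<epsilon> ** R t"
    and N: "N \<ge> 1"
  shows "0 \<le> (\<Sum>k<N. cdim (J1 \<Gamma> R (exp (2 * pi * \<i> / of_nat N) ^ k)))
       \<and> (\<Sum>k<N. cdim (J1 \<Gamma> R (exp (2 * pi * \<i> / of_nat N) ^ k))) \<le> 2 * CARD('n)"
proof -
  let ?\<omega> = "\<lambda>k. exp (2 * pi * \<i> / of_nat N) ^ k"
  have "(\<Sum>k<N. cdim (J1 \<Gamma> R (?\<omega> k))) = (\<Sum>z\<in>?\<omega> ` {..<N}. cdim (J1 \<Gamma> R z))"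
    using sum.reindex[OF roots_of_unity_inj[OF N], of "\<lambda>z. cdim (J1 \<Gamma> R z)"]
    by (simp add: comp_def)
  also have "\<dots> \<le> CARD('n)"
    by (rule sum_cdim_J1_le[OF \<Gamma>_diff \<Gamma>_C1 R_cont]) simp
  finally show ?thesis by simp
qed

end
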